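(* Let $\Gamma$ be a distance-regular graph with diameter $D\ge3$ and $a_1\ne0$. Let $\sigma_0,\dots,\sigma_D$ be a nontrivial pseudo cosine sequence which is tight, with auxiliary parameter $\varepsilon$, and write $\sigma=\sigma_1$. Then for $1\le i\le D-1$ the quantities $(\sigma_{i+1}-\sigma_i)(\sigma_{i-1}-\sigma_i)$ and $(\sigma^2-\sigma_2)(1-\varepsilon\sigma)$ are nonzero and $$a_i=g\,\frac{(\sigma_{i+1}-\sigma\sigma_i)(\sigma_{i-1}-\sigma\sigma_i)}{(\sigma_{i+1}-\sigma_i)(\sigma_{i-1}-\sigma_i)},\qquad\text{where}\quad g=\frac{(\varepsilon-1)(1-\sigma_2)}{(\sigma^2-\sigma_2)(1-\varepsilon\sigma)}.$$
   Context: $\Gamma$ is a finite connected undirected graph without loops or multiple edges, distance-regular with diameter $D$, intersection numbers $a_i,b_i,c_i$ ($c_0=0$, $b_D=0$), valency $k$, $c_i+a_i+b_i=k$. For $\theta\in\mathbb{R}$ the pseudo cosine sequence for $\theta$ is the sequence of reals $\sigma_0,\dots,\sigma_D$ with $\sigma_0=1$ and $c_i\sigma_{i-1}+a_i\sigma_i+b_i\sigma_{i+1}=\theta\sigma_i$ for $0\le i\le D-1$; nontrivial means $\sigma_1\ne1$. Pseudo cosine sequences $\sigma_i$, $\rho_i$ form a tight pair if $(\sigma_i\rho_i)_{i=0}^D$ is a pseudo cosine sequence. For a tight pair of nontrivial pseudo cosine sequences, an auxiliary parameter is a real $\varepsilon$ with $\sigma_i\rho_i-\sigma_{i-1}\rho_{i-1}=\varepsilon(\sigma_{i-1}\rho_i-\sigma_i\rho_{i-1})$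 for $1\le i\le D$. When $a_1\ne0$, a nontrivial pseudo cosine sequence is tight if some nontrivial pseudo cosine sequence forms a tight pair with it; its auxiliary parameter is the (uniquely determined) auxiliary parameter of that pair. *)

theory Defs
  imports Complex_Main
begin

definition simple_graph :: "'v set \<Rightarrow> ('v \<Rightarrow> 'v \<Rightarrow> bool) \<Rightarrow> bool" where
  "simple_graph V E \<longleftrightarrow> finite V \<and> V \<noteq> {} \<and>
     (\<forall>x y. E x y \<longrightarrow> x \<in> V \<and> y \<in> V) \<and>
     (\<forall>x y. E x y \<longrightarrow> E y x) \<and> (\<forall>x. \<not> E x x)"

fun walk_n :: "'v set \<Rightarrow> ('v \<Rightarrow> 'v \<Rightarrow> bool) \<Rightarrow> nat \<Rightarrow> 'v \<Rightarrow> 'v \<Rightarrow> bool" where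
  "walk_n V E 0 x y = (x = y \<and> x \<in> V)"
| "walk_n V E (Suc n) x y = (\<exists>z. E x z \<and> walk_n V E n z y)"

definition connected_graph :: "'v set \<Rightarrow> ('v \<Rightarrow> 'v \<Rightarrow> bool) \<Rightarrow> bool" where
  "connected_graph V E \<longleftrightarrow> (\<forall>x\<in>V. \<forall>y\<in>V. \<exists>n. walk_n V E n x y)"

definition gdist :: "'v set \<Rightarrow> ('v \<Rightarrow> 'v \<Rightarrow> bool) \<Rightarrow> 'v \<Rightarrow> 'v \<Rightarrow> nat" where
  "gdist V E x y = (LEAST n. walk_n V E n x y)"

definition diameter :: "'v set \<Rightarrow> ('v \<Rightarrow> 'v \<Rightarrow> bool) \<Rightarrow> nat" where
  "diameter V E = Max {gdist V E x y | x y. x \<in> V \<and> y \<in> V}"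

definition distance_regular ::
  "'v set \<Rightarrow> ('v \<Rightarrow> 'v \<Rightarrow> bool) \<Rightarrow> nat \<Rightarrow> (nat \<Rightarrow> nat) \<Rightarrow> (nat \<Rightarrow> nat) \<Rightarrow> (nat \<Rightarrow> nat) \<Rightarrow> bool" where
  "distance_regular V E D a b c \<longleftrightarrow>
     simple_graph V E \<and> connected_graph V E \<and> diameter V E = D \<and>
     c 0 = 0 \<and> b D = 0 \<and>
     (\<forall>x\<in>V. \<forall>y\<in>V. let i = gdist V E x y in
        (1 \<le> i \<longrightarrow> card {z\<in>V. E y z \<and> gdist V E x z + 1 = i} = c i) \<and>
        card {z\<in>V. E y z \<and> gdist V E x z = i} = a i \<and>
        (i < D \<longrightarrow> card {z\<in>V. E y z \<and> gdist V E x z = i + 1} = b i))"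

text \<open>Pseudo cosine sequence for theta (only sigma 0 .. sigma D matter).\<close>
definition pseudo_cosine ::
  "nat \<Rightarrow> (nat \<Rightarrow> nat) \<Rightarrow> (nat \<Rightarrow> nat) \<Rightarrow> (nat \<Rightarrow> nat) \<Rightarrow> real \<Rightarrow> (nat \<Rightarrow> real) \<Rightarrow> bool" where
  "pseudo_cosine D a b c \<theta> \<sigma> \<longleftrightarrow> \<sigma> 0 = 1 \<and>
     (\<forall>i<D. real (c i) * (if i = 0 then 0 else \<sigma> (i - 1)) + real (a i) * \<sigma> i
              + real (b i) * \<sigma> (i + 1) = \<theta> * \<sigma> i)"

definition is_pseudo_cosine ::
  "nat \<Rightarrow> (nat \<Rightarrow> nat) \<Rightarrow> (nat \<Rightarrow> nat) \<Rightarrow> (nat \<Rightarrow> nat) \<Rightarrow> (nat \<Rightarrow> real) \<Rightarrow> bool" where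
  "is_pseudo_cosine D a b c \<sigma> \<longleftrightarrow> (\<exists>\<theta>. pseudo_cosine D a b c \<theta> \<sigma>)"

definition nontrivial_pc ::
  "nat \<Rightarrow> (nat \<Rightarrow> nat) \<Rightarrow> (nat \<Rightarrow> nat) \<Rightarrow> (nat \<Rightarrow> nat) \<Rightarrow> (nat \<Rightarrow> real) \<Rightarrow> bool" where
  "nontrivial_pc D a b c \<sigma> \<longleftrightarrow> is_pseudo_cosine D a b c \<sigma> \<and> \<sigma> 1 \<noteq> 1"

definition tight_pair ::
  "nat \<Rightarrow> (nat \<Rightarrow> nat) \<Rightarrow> (nat \<Rightarrow> nat) \<Rightarrow> (nat \<Rightarrow> nat) \<Rightarrow> (nat \<Rightarrow> real) \<Rightarrow> (nat \<Rightarrow> real) \<Rightarrow> bool" where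
  "tight_pair D a b c \<sigma> \<rho> \<longleftrightarrow> is_pseudo_cosine D a b c \<sigma> \<and> is_pseudo_cosine D a b c \<rho> \<and>
     is_pseudo_cosine D a b c (\<lambda>i. \<sigma> i * \<rho> i)"

definition auxiliary_parameter ::
  "nat \<Rightarrow> (nat \<Rightarrow> real) \<Rightarrow> (nat \<Rightarrow> real) \<Rightarrow> real \<Rightarrow> bool" where
  "auxiliary_parameter D \<sigma> \<rho> \<epsilon> \<longleftrightarrow>
     (\<forall>i. 1 \<le> i \<and> i \<le> D \<longrightarrow>
        \<sigma> i * \<rho> i - \<sigma> (i - 1) * \<rho> (i - 1) = \<epsilon> * (\<sigma> (i - 1) * \<rho> i - \<sigma> i * \<rho> (i - 1)))"

definition tight_with_aux ::
  "nat \<Rightarrow> (nat \<Rightarrow> nat) \<Rightarrow> (nat \<Rightarrow> nat) \<Rightarrow> (nat \<Rightarrow> nat) \<Rightarrow> (nat \<Rightarrow> real) \<Rightarrow> real \<Rightarrow> bool" where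
  "tight_with_aux D a b c \<sigma> \<epsilon> \<longleftrightarrow>
     (\<exists>\<rho>. nontrivial_pc D a b c \<rho> \<and> tight_pair D a b c \<sigma> \<rho> \<and>
          auxiliary_parameter D \<sigma> \<rho> \<epsilon>)"

end

theory Submission
  imports Defs
begin

(* Let \<rho> form a tight pair with \<sigma>, with auxiliary parameter \<epsilon>. The auxiliary relations at levels i and i + 1
   express \<rho>_(i-1) and \<rho>_(i+1) as multiples of \<rho>_i, and the one at level 1 expresses \<rho>_1 through
   \<sigma> = \<sigma>_1. Substituting into the three-term recurrence of \<rho> and combining with that of \<sigma>
   eliminates b_i and c_i:
     a_i (\<sigma>_(i+1) - \<sigma>_i) (\<sigma>_(i-1) - \<sigma>_i) (\<sigma> - \<epsilon>) = k (1 - \<epsilon>) (\<sigma>_(i+1) - \<sigma> \<sigma>_i) (\<sigma>_(i-1) - \<sigma> \<sigma>_i).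
   At i = 1 the recurrence of \<sigma> turns this into (1 - \<sigma>_2) (\<sigma> - \<epsilon>) = k (1 - \<epsilon> \<sigma>) (\<sigma>_2 - \<sigma>^2),
   so g = k (1 - \<epsilon>) / (\<sigma> - \<epsilon>). What remains is nondegeneracy (\<epsilon> \<noteq> \<plusminus>1, \<sigma> \<noteq> \<epsilon>,
   \<sigma>^2 \<noteq> \<sigma>_2, \<epsilon> \<sigma> \<noteq> 1, \<sigma>_(i\<plusminus>1) \<noteq> \<sigma>_i), which follows from the recurrences at levels 1 to 3
   and the positivity of a_i, b_i, c_i; the latter is where a_1 \<noteq> 0 enters. *)

section \<open>Distances in connected simple graphs\<close>

locale connected_simple_graph =
  fixes V :: "'v set" and E :: "'v \<Rightarrow> 'v \<Rightarrow> bool"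
  assumes simple: "simple_graph V E" and connected: "connected_graph V E"
begin

abbreviation walk :: "nat \<Rightarrow> 'v \<Rightarrow> 'v \<Rightarrow> bool" where "walk \<equiv> walk_n V E"
abbreviation distance :: "'v \<Rightarrow> 'v \<Rightarrow> nat" (\<open>\<partial>\<close>) where "\<partial> \<equiv> gdist V E"

lemma edge_in_V: "E x y \<Longrightarrow> x \<in> V \<and> y \<in> V"
  and edge_sym: "E x y \<Longrightarrow> E y x"
  and no_loop: "\<not> E x x"
  and finite_V: "finite V"
  and V_nonempty: "V \<noteq> {}"
  using simple unfolding simple_graph_def by blast+

lemma card_Collect_V_pos: "u \<in> V \<Longrightarrow> P u \<Longrightarrow> 0 < card {z \<in> V. P z}"
  using finite_V by (auto simp: card_gt_0_iff)

lemma walk_in_V: "walk n x y \<Longrightarrow> x \<in> V \<and> y \<in> V"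
  by (induction n arbitrary: x) (auto dest: edge_in_V)

lemma walk_append: "walk m x v \<Longrightarrow> walk n v y \<Longrightarrow> walk (m + n) x y"
  by (induction m arbitrary: x) auto

lemma walk_split: "walk (m + n) x y \<Longrightarrow> \<exists>v. walk m x v \<and> walk n v y"
proof (induction m arbitrary: x)
  case 0
  then show ?case using walk_in_V by auto
next
  case (Suc m)
  then obtain z where "E x z" "walk (m + n) z y" by auto
  moreover obtain v where "walk m z v" "walk n v y" using Suc.IH calculation(2) by blast
  ultimately show ?case by auto
qed

lemma walk_distance: "x \<in> V \<Longrightarrow> y \<in> V \<Longrightarrow> walk (\<partial> x y) x y"
  using connected unfolding connected_graph_def gdist_def by (meson LeastI_ex)

lemma distance_le_walk: "walk n x y \<Longrightarrow> \<partial> x y \<le> n"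
  unfolding gdist_def by (rule Least_le)

lemma distance_triangle: "x \<in> V \<Longrightarrow> y \<in> V \<Longrightarrow> z \<in> V \<Longrightarrow> \<partial> x z \<le> \<partial> x y + \<partial> y z"
  using walk_distance[of x y] walk_distance[of y z] walk_append distance_le_walk by blast

lemma distance_eq_0_iff: "x \<in> V \<Longrightarrow> y \<in> V \<Longrightarrow> \<partial> x y = 0 \<longleftrightarrow> x = y"
  using walk_distance[of x y] distance_le_walk[of 0 x y] by auto

lemma distance_edge: "E x y \<Longrightarrow> \<partial> x y = 1"
proof -
  assume xy: "E x y"
  then have "walk 1 x y" using edge_in_V by auto
  then have "\<partial> x y \<le> 1" by (rule distance_le_walk)
  moreover have "\<partial> x y \<noteq> 0" using xy edge_in_V no_loop distance_eq_0_iff by metis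
  ultimately show ?thesis by simp
qed

lemma edge_if_distance_1: "x \<in> V \<Longrightarrow> y \<in> V \<Longrightarrow> \<partial> x y = 1 \<Longrightarrow> E x y"
  using walk_distance[of x y] by auto

lemma distance_edge_bounds:
  "x \<in> V \<Longrightarrow> E y z \<Longrightarrow> \<partial> x z \<le> \<partial> x y + 1 \<and> \<partial> x y \<le> \<partial> x z + 1"
  using distance_triangle[of x y z] distance_triangle[of x z y] distance_edge[of y z]
    distance_edge[of z y] edge_sym[of y z] edge_in_V[of y z] by fastforce

end

section \<open>Parameters of distance-regular graphs\<close>

locale distance_regular_graph =
  fixes V :: "'v set" and E :: "'v \<Rightarrow> 'v \<Rightarrow> bool"
    and D :: nat and a b c :: "nat \<Rightarrow> nat"
  assumes distance_regular: "distance_regular V E D a b c"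

sublocale distance_regular_graph \<subseteq> connected_simple_graph
  using distance_regular by unfold_locales (simp_all add: distance_regular_def)

context distance_regular_graph
begin

lemma diameter_eq: "diameter V E = D"
  and c_0: "c 0 = 0"
  and c_card: "x \<in> V \<Longrightarrow> y \<in> V \<Longrightarrow> 1 \<le> \<partial> x y \<Longrightarrow>
    card {z \<in> V. E y z \<and> \<partial> x z + 1 = \<partial> x y} = c (\<partial> x y)"
  and a_card: "x \<in> V \<Longrightarrow> y \<in> V \<Longrightarrow>
    card {z \<in> V. E y z \<and> \<partial> x z = \<partial> x y} = a (\<partial> x y)"
  and b_card: "x \<in> V \<Longrightarrow> y \<in> V \<Longrightarrow> \<partial> x y < D \<Longrightarrow>
    card {z \<in> V. E y z \<and> \<partial> x z = \<partial> x y + 1} = b (\<partial> x y)"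
  using distance_regular unfolding distance_regular_def Let_def by auto

lemma diameter_attained: "\<exists>x\<in>V. \<exists>y\<in>V. \<partial> x y = D"
proof -
  let ?S = "{\<partial> x y | x y. x \<in> V \<and> y \<in> V}"
  have "?S = case_prod \<partial> ` (V \<times> V)" by auto
  then have "finite ?S" using finite_V by simp
  moreover have "?S \<noteq> {}" using V_nonempty by auto
  ultimately have "Max ?S \<in> ?S" by (rule Max_in)
  then have "D \<in> ?S" using diameter_eq unfolding diameter_def by simp
  then show ?thesis by blast
qed

lemma outward_edge_exists:
  assumes "i < D"
  obtains x y z where "x \<in> V" "y \<in> V" "\<partial> x y = i" "E y z" "\<partial> x z = i + 1"
proof -
  obtain x w where xw: "x \<in> V" "w \<in> V" "\<partial> x w = D" using diameter_attained by blast
  have "walk (i + Suc (D - i - 1)) x w" using walk_distance[OF xw(1,2)] xw(3) assms by simp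
  then obtain y where y: "walk i x y" "walk (Suc (D - i - 1)) y w" using walk_split by blast
  then obtain z where z: "E y z" "walk (D - i - 1) z w" by auto
  have "D \<le> \<partial> x z + \<partial> z w" using distance_triangle[of x z w] xw edge_in_V[OF z(1)] by simp
  moreover have "\<partial> z w \<le> D - i - 1" using distance_le_walk[OF z(2)] .
  moreover have "\<partial> x y \<le> i" using distance_le_walk[OF y(1)] .
  moreover have "\<partial> x z \<le> \<partial> x y + 1" using distance_edge_bounds[OF xw(1) z(1)] by simp
  ultimately have "\<partial> x y = i" "\<partial> x z = i + 1" using assms by linarith+
  moreover have "y \<in> V" using walk_in_V[OF y(1)] by simp
  ultimately show ?thesis using that xw(1) z(1) by blast
qed

lemma a_0: "a 0 = 0"
proof -
  obtain x where x: "x \<in> V" using V_nonempty by blast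
  have xx: "\<partial> x x = 0" using distance_eq_0_iff[OF x x] by simp
  have "{z \<in> V. E x z \<and> \<partial> x z = \<partial> x x} = {}"
    using distance_edge xx by auto
  with a_card[OF x x] have "a (\<partial> x x) = 0" by simp
  then show ?thesis unfolding xx .
qed

lemma valency: "0 < D \<Longrightarrow> y \<in> V \<Longrightarrow> card {z \<in> V. E y z} = b 0"
proof -
  assume "0 < D" and y: "y \<in> V"
  have yy: "\<partial> y y = 0" using distance_eq_0_iff[OF y y] by simp
  have "{z \<in> V. E y z} = {z \<in> V. E y z \<and> \<partial> y z = \<partial> y y + 1}"
    using distance_edge yy by auto
  also have "card \<dots> = b (\<partial> y y)" by (rule b_card[OF y y]) (simp add: yy \<open>0 < D\<close>)
  finally show ?thesis unfolding yy .
qed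

lemma c_1: "0 < D \<Longrightarrow> c 1 = 1"
proof -
  assume "0 < D"
  obtain x y z where t: "x \<in> V" "y \<in> V" "\<partial> x y = 0" "E y z" "\<partial> x z = 0 + 1"
    by (rule outward_edge_exists[OF \<open>0 < D\<close>])
  have "y = x" using t(1-3) distance_eq_0_iff by blast
  have "{w \<in> V. E z w \<and> \<partial> x w + 1 = \<partial> x z} = {w \<in> V. E z w \<and> w = x}"
    using t(5) distance_eq_0_iff[OF t(1)] by auto
  also have "\<dots> = {x}" using t(1,4) \<open>y = x\<close> edge_sym by auto
  finally show ?thesis using c_card[of x z] t(1,5) edge_in_V[OF t(4)] by simp
qed

lemma abc_sum: "i < D \<Longrightarrow> a i + b i + c i = b 0"
proof (cases "i = 0")
  case True
  then show ?thesis using a_0 c_0 by simp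
next
  case False
  assume "i < D"
  then obtain x y z where t: "x \<in> V" "y \<in> V" "\<partial> x y = i" "E y z" "\<partial> x z = i + 1"
    by (rule outward_edge_exists)
  define C where "C = {w \<in> V. E y w \<and> \<partial> x w + 1 = i}"
  define A where "A = {w \<in> V. E y w \<and> \<partial> x w = i}"
  define B where "B = {w \<in> V. E y w \<and> \<partial> x w = i + 1}"
  have "\<partial> x w + 1 = i \<or> \<partial> x w = i \<or> \<partial> x w = i + 1" if "E y w" for w
    using distance_edge_bounds[OF t(1) that] t(3) by linarith
  then have "{w \<in> V. E y w} = C \<union> A \<union> B" unfolding A_def B_def C_def by blast
  moreover have "finite C" "finite A" "finite B" using finite_V unfolding A_def B_def C_def by auto
  moreover have "C \<inter> A = {}" "(C \<union> A) \<inter> B = {}" unfolding A_def B_def C_def by auto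
  ultimately have "card {w \<in> V. E y w} = card C + card A + card B"
    by (simp add: card_Un_disjoint)
  moreover have "card C = c i" using c_card[OF t(1,2)] t(3) False unfolding C_def by simp
  moreover have "card A = a i" using a_card[OF t(1,2)] t(3) unfolding A_def by simp
  moreover have "card B = b i" using b_card[OF t(1,2)] t(3) \<open>i < D\<close> unfolding B_def by simp
  ultimately show ?thesis using valency[OF _ t(2)] \<open>i < D\<close> by simp
qed

lemma b_pos: "i < D \<Longrightarrow> 0 < b i"
proof -
  assume "i < D"
  then obtain x y z where t: "x \<in> V" "y \<in> V" "\<partial> x y = i" "E y z" "\<partial> x z = i + 1"
    by (rule outward_edge_exists)
  then have "0 < card {w \<in> V. E y w \<and> \<partial> x w = \<partial> x y + 1}"
    using edge_in_V by (intro card_Collect_V_pos[of z]) auto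
  then show ?thesis using b_card[OF t(1,2)] t(3) \<open>i < D\<close> by simp
qed

lemma c_pos: "1 \<le> i \<Longrightarrow> i \<le> D \<Longrightarrow> 0 < c i"
proof -
  assume "1 \<le> i" "i \<le> D"
  then have "i - 1 < D" by simp
  then obtain x y z where t: "x \<in> V" "y \<in> V" "\<partial> x y = i - 1" "E y z" "\<partial> x z = i - 1 + 1"
    by (rule outward_edge_exists)
  have z: "z \<in> V" "\<partial> x z = i" using t(4,5) edge_in_V \<open>1 \<le> i\<close> by auto
  have "0 < card {w \<in> V. E z w \<and> \<partial> x w + 1 = \<partial> x z}"
    using t(2,3,4) z(2) \<open>1 \<le> i\<close> edge_sym by (intro card_Collect_V_pos[of y]) auto
  then show ?thesis using c_card[OF t(1) z(1)] z(2) \<open>1 \<le> i\<close> by simp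
qed

lemma a_pos:
  assumes "a 1 \<noteq> 0" and "1 \<le> i" and "i < D"
  shows "0 < a i"
proof -
  obtain x y z where t: "x \<in> V" "y \<in> V" "\<partial> x y = i" "E y z" "\<partial> x z = i + 1"
    using outward_edge_exists[OF \<open>i < D\<close>] by blast
  have z: "z \<in> V" using edge_in_V[OF t(4)] by simp
  have "card {w \<in> V. E z w \<and> \<partial> y w = 1} \<noteq> 0"
    using a_card[OF t(2) z] distance_edge[OF t(4)] assms(1) by simp
  then obtain w where w: "w \<in> V" "E z w" "E y w"
    using edge_if_distance_1[OF t(2)] by (metis (mono_tags, lifting) card.empty empty_Collect_eq)
  have "\<partial> x w = i \<or> \<partial> x w = i + 1"
    using distance_edge_bounds[OF t(1) w(3)] distance_edge_bounds[OF t(1) w(2)] t(3,5) by linarith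
  then show ?thesis
  proof
    assume "\<partial> x w = i"
    then have "0 < card {u \<in> V. E y u \<and> \<partial> x u = \<partial> x y}"
      using w t(3) by (intro card_Collect_V_pos[of w]) auto
    then show ?thesis using a_card[OF t(1,2)] t(3) by simp
  next
    assume xw: "\<partial> x w = i + 1"
    obtain j where j: "i = Suc j" using \<open>1 \<le> i\<close> by (cases i) auto
    then obtain v where v: "E x v" "walk j v y" using walk_distance[OF t(1,2)] t(3) by auto
    have vV: "v \<in> V" using edge_in_V[OF v(1)] by simp
    have "\<partial> v y \<le> j" "\<partial> x v = 1" using distance_le_walk[OF v(2)] distance_edge[OF v(1)] by auto
    moreover have "\<partial> x w \<le> \<partial> x v + \<partial> v w" "\<partial> v w \<le> \<partial> v y + \<partial> y w"
      "\<partial> x z \<le> \<partial> x v + \<partial> v z" "\<partial> v z \<le> \<partial> v y + \<partial> y z"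
      using distance_triangle t(1,2) z w(1) vV by blast+
    moreover have "\<partial> y w = 1" "\<partial> y z = 1" using distance_edge w(3) t(4) by auto
    ultimately have "\<partial> v w = i" "\<partial> v z = i" using xw t(5) j by linarith+
    then have "0 < card {u \<in> V. E w u \<and> \<partial> v u = \<partial> v w}"
      using z edge_sym[OF w(2)] by (intro card_Collect_V_pos[of z]) auto
    then show ?thesis using a_card[OF vV w(1)] \<open>\<partial> v w = i\<close> by simp
  qed
qed

end

section \<open>Pseudo cosine sequences\<close>

lemma pseudo_cosine_theta:
  assumes "pseudo_cosine D a b c \<theta> \<sigma>" and "a 0 = 0" and "0 < D"
  shows "\<theta> = real (b 0) * \<sigma> 1"
proof -
  have "\<sigma> 0 = 1" and "real (c 0) * 0 + real (a 0) * \<sigma> 0 + real (b 0) * \<sigma> 1 = \<theta> * \<sigma> 0"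
    using assms(1,3) unfolding pseudo_cosine_def by auto
  then show ?thesis using assms(2) by simp
qed

lemma pseudo_cosine_recurrence:
  assumes "pseudo_cosine D a b c \<theta> \<sigma>" and "a 0 = 0" and "1 \<le> i" and "i < D"
  shows "real (c i) * \<sigma> (i - 1) + real (a i) * \<sigma> i + real (b i) * \<sigma> (i + 1)
    = real (b 0) * \<sigma> 1 * \<sigma> i"
  using assms pseudo_cosine_theta[OF assms(1,2)] unfolding pseudo_cosine_def by auto

lemma pseudo_cosine_no_consecutive_zeros:
  assumes "pseudo_cosine D a b c \<theta> \<sigma>" and "\<And>i. 1 \<le> i \<Longrightarrow> i < D \<Longrightarrow> 0 < c i"
  shows "j < D \<Longrightarrow> \<sigma> j \<noteq> 0 \<or> \<sigma> (j + 1) \<noteq> 0"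
proof (induction j)
  case 0
  then show ?case using assms(1) unfolding pseudo_cosine_def by simp
next
  case (Suc j)
  show ?case
  proof (rule ccontr)
    assume "\<not> ?case"
    moreover have "real (c (Suc j)) * \<sigma> j + real (a (Suc j)) * \<sigma> (Suc j)
        + real (b (Suc j)) * \<sigma> (Suc j + 1) = \<theta> * \<sigma> (Suc j)"
      using assms(1) Suc.prems unfolding pseudo_cosine_def by auto
    ultimately have "real (c (Suc j)) * \<sigma> j = 0" by simp
    then have "\<sigma> j = 0" using assms(2)[of "Suc j"] Suc.prems by simp
    then show False using Suc.IH Suc.prems \<open>\<not> ?case\<close> by simp
  qed
qed

section \<open>Pseudo cosine sequences with an auxiliary parameter\<close>

lemma a_level_identity_scaled:
  fixes a b c k \<sigma> \<rho> \<epsilon> sm s sp rm r rp :: real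
  assumes sum: "k = a + b + c"
    and rec_s: "c * sm + a * s + b * sp = k * \<sigma> * s"
    and rec_r: "c * rm + a * r + b * rp = k * \<rho> * r"
    and aux_i: "s * r - sm * rm = \<epsilon> * (sm * r - s * rm)"
    and aux_Suc_i: "sp * rp - s * r = \<epsilon> * (s * rp - sp * r)"
    and aux_1: "\<sigma> * \<rho> - 1 = \<epsilon> * (\<rho> - \<sigma>)"
  shows "r * (1 + \<epsilon>) * (a * (sp - s) * (sm - s) * (\<sigma> - \<epsilon>)
    - k * (1 - \<epsilon>) * (sp - \<sigma> * s) * (sm - \<sigma> * s)) = 0"
proof -
  have down: "(rm - r) * (sm - \<epsilon> * s) = r * (1 + \<epsilon>) * (s - sm)" using aux_i by algebra
  have up: "(rp - r) * (sp - \<epsilon> * s) = r * (1 + \<epsilon>) * (s - sp)" using aux_Suc_i by algebra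
  have rho: "(\<rho> - 1) * (\<sigma> - \<epsilon>) = (1 + \<epsilon>) * (1 - \<sigma>)" using aux_1 by algebra
  have diff_r: "c * (rm - r) + b * (rp - r) = k * (\<rho> - 1) * r" using sum rec_r by algebra
  have diff_s: "c * (sm - s) + b * (sp - s) = k * (\<sigma> - 1) * s" using sum rec_s by algebra
  have "r * (1 + \<epsilon>) * (c * (s - sm) * (sp - \<epsilon> * s) * (\<sigma> - \<epsilon>) + b * (s - sp) * (sm - \<epsilon> * s) * (\<sigma> - \<epsilon>)
      - k * (1 - \<sigma>) * (sm - \<epsilon> * s) * (sp - \<epsilon> * s)) = 0"
    using diff_r down up rho by algebra
  then show ?thesis using diff_s sum by algebra
qed

lemma a_level_identity:
  fixes a b c k \<sigma> \<rho> \<epsilon> sm s sp rm r rp :: real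
  assumes sum: "k = a + b + c"
    and rec_s: "c * sm + a * s + b * sp = k * \<sigma> * s"
    and rec_r: "c * rm + a * r + b * rp = k * \<rho> * r"
    and aux_i: "s * r - sm * rm = \<epsilon> * (sm * r - s * rm)"
    and aux_Suc_i: "sp * rp - s * r = \<epsilon> * (s * rp - sp * r)"
    and aux_1: "\<sigma> * \<rho> - 1 = \<epsilon> * (\<rho> - \<sigma>)"
    and "\<epsilon> \<noteq> -1" and "c \<noteq> 0" and "rm \<noteq> 0 \<or> r \<noteq> 0"
  shows "a * (sp - s) * (sm - s) * (\<sigma> - \<epsilon>) = k * (1 - \<epsilon>) * (sp - \<sigma> * s) * (sm - \<sigma> * s)"
proof (cases "r = 0")
  case False
  moreover have "1 + \<epsilon> \<noteq> 0" using \<open>\<epsilon> \<noteq> -1\<close> by linarith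
  ultimately show ?thesis
    using a_level_identity_scaled[OF assms(1-6)] by simp
next
  case True
  with \<open>rm \<noteq> 0 \<or> r \<noteq> 0\<close> have "rm \<noteq> 0" by simp
  moreover have "rm * (sm - \<epsilon> * s) = 0" using aux_i True by algebra
  ultimately have sm: "sm = \<epsilon> * s" by simp
  have "c * rm + b * rp = 0" using rec_r True by simp
  with \<open>rm \<noteq> 0\<close> \<open>c \<noteq> 0\<close> have "rp \<noteq> 0" by auto
  moreover have "rp * (sp - \<epsilon> * s) = 0" using aux_Suc_i True by algebra
  ultimately have sp: "sp = \<epsilon> * s" by simp
  have "s * (a * (1 - \<epsilon>) - k * (\<sigma> - \<epsilon>)) = 0" using rec_s sum unfolding sm sp by algebra
  then show ?thesis unfolding sm sp by algebra
qed

locale auxiliary_parameter_pair =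
  fixes D :: nat and a b c :: "nat \<Rightarrow> nat" and \<sigma> \<rho> :: "nat \<Rightarrow> real" and \<epsilon> :: real
  assumes D_ge_3: "3 \<le> D"
    and a_0: "a 0 = 0"
    and c_1: "c 1 = 1"
    and abc_sum: "\<And>i. 1 \<le> i \<Longrightarrow> i < D \<Longrightarrow> a i + b i + c i = b 0"
    and abc_pos: "\<And>i. 1 \<le> i \<Longrightarrow> i < D \<Longrightarrow> 0 < a i \<and> 0 < b i \<and> 0 < c i"
    and sigma_nontrivial: "nontrivial_pc D a b c \<sigma>"
    and rho_nontrivial: "nontrivial_pc D a b c \<rho>"
    and aux: "auxiliary_parameter D \<sigma> \<rho> \<epsilon>"
begin

abbreviation k :: real where "k \<equiv> real (b 0)"

lemma aux_at: "1 \<le> i \<Longrightarrow> i \<le> D \<Longrightarrow>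
    \<sigma> i * \<rho> i - \<sigma> (i - 1) * \<rho> (i - 1) = \<epsilon> * (\<sigma> (i - 1) * \<rho> i - \<sigma> i * \<rho> (i - 1))"
  using aux unfolding auxiliary_parameter_def by blast

lemma swap: "auxiliary_parameter_pair D a b c \<rho> \<sigma> (-\<epsilon>)"
proof
  show "auxiliary_parameter D \<rho> \<sigma> (-\<epsilon>)"
    unfolding auxiliary_parameter_def
  proof (intro allI impI)
    fix i assume "1 \<le> i \<and> i \<le> D"
    then have "\<sigma> i * \<rho> i - \<sigma> (i - 1) * \<rho> (i - 1) = \<epsilon> * (\<sigma> (i - 1) * \<rho> i - \<sigma> i * \<rho> (i - 1))"
      using aux_at by blast
    then show "\<rho> i * \<sigma> i - \<rho> (i - 1) * \<sigma> (i - 1) = - \<epsilon> * (\<rho> (i - 1) * \<sigma> i - \<rho> i * \<sigma> (i - 1))"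
      by algebra
  qed
qed (use D_ge_3 a_0 c_1 abc_sum abc_pos sigma_nontrivial rho_nontrivial in auto)

lemma aux_level_1: "\<sigma> 1 * \<rho> 1 - 1 = \<epsilon> * (\<rho> 1 - \<sigma> 1)"
  using aux_at[of 1] D_ge_3 sigma_nontrivial rho_nontrivial
  unfolding nontrivial_pc_def is_pseudo_cosine_def pseudo_cosine_def by auto

lemma sigma_0: "\<sigma> 0 = 1"
  and sigma_1_ne_1: "\<sigma> 1 \<noteq> 1"
  using sigma_nontrivial unfolding nontrivial_pc_def is_pseudo_cosine_def pseudo_cosine_def by auto

lemma sigma_recurrence: "1 \<le> i \<Longrightarrow> i < D \<Longrightarrow>
    real (c i) * \<sigma> (i - 1) + real (a i) * \<sigma> i + real (b i) * \<sigma> (i + 1) = k * \<sigma> 1 * \<sigma> i"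
  using sigma_nontrivial pseudo_cosine_recurrence a_0
  unfolding nontrivial_pc_def is_pseudo_cosine_def by blast

lemma sigma_no_consecutive_zeros: "j < D \<Longrightarrow> \<sigma> j \<noteq> 0 \<or> \<sigma> (j + 1) \<noteq> 0"
  using sigma_nontrivial pseudo_cosine_no_consecutive_zeros abc_pos
  unfolding nontrivial_pc_def is_pseudo_cosine_def by blast

lemma k_eq: "1 \<le> i \<Longrightarrow> i < D \<Longrightarrow> k = real (a i) + real (b i) + real (c i)"
  using abc_sum by (metis of_nat_add)

lemma k_level_1: "k = real (a 1) + real (b 1) + 1"
  using k_eq[of 1] c_1 D_ge_3 by simp

lemma k_level_2: "k = real (a 2) + real (b 2) + real (c 2)"
  using k_eq[of 2] D_ge_3 by simp

lemma k_pos: "0 < k"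
  using k_level_1 by simp

lemma sigma_level_1: "1 + real (a 1) * \<sigma> 1 + real (b 1) * \<sigma> 2 = k * \<sigma> 1 * \<sigma> 1"
  using sigma_recurrence[of 1] D_ge_3 sigma_0 c_1 by (simp add: numeral_2_eq_2)

lemma sigma_level_2: "real (c 2) * \<sigma> 1 + real (a 2) * \<sigma> 2 + real (b 2) * \<sigma> 3 = k * \<sigma> 1 * \<sigma> 2"
  using sigma_recurrence[of 2] D_ge_3 by (simp add: numeral_3_eq_3)

lemma sigma_2_gt_1: "\<sigma> 1 = -1 \<Longrightarrow> 1 < \<sigma> 2"
proof -
  assume "\<sigma> 1 = -1"
  then have "real (b 1) * (\<sigma> 2 - 1) = 2 * real (a 1)"
    using sigma_level_1 k_level_1 by algebra
  moreover have "0 < a 1" "0 < b 1" using abc_pos[of 1] D_ge_3 by auto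
  ultimately have "0 < real (b 1) * (\<sigma> 2 - 1)" by simp
  with \<open>0 < b 1\<close> show ?thesis by (simp add: zero_less_mult_iff)
qed

lemma sigma_3_ne_minus_sigma_2: "\<sigma> 1 = -1 \<Longrightarrow> \<sigma> 3 \<noteq> - \<sigma> 2"
proof
  assume \<sigma>1: "\<sigma> 1 = -1" and \<sigma>3: "\<sigma> 3 = - \<sigma> 2"
  have eq: "\<sigma> 2 * (2 * real (a 2) + real (c 2)) = real (c 2)"
    using sigma_level_2 k_level_2 \<sigma>1 \<sigma>3 by algebra
  have "0 < a 2" using abc_pos[of 2] D_ge_3 by simp
  moreover have "0 < (\<sigma> 2 - 1) * (2 * real (a 2) + real (c 2))"
    using sigma_2_gt_1[OF \<sigma>1] calculation by (intro mult_pos_pos) auto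
  ultimately show False using eq by (simp add: left_diff_distrib)
qed

lemma aux_ne_minus_one: "\<epsilon> \<noteq> -1"
proof
  assume \<epsilon>: "\<epsilon> = -1"
  interpret rho: auxiliary_parameter_pair D a b c \<rho> \<sigma> "-\<epsilon>" by (rule swap)
  have "(\<sigma> 1 + 1) * (\<rho> 1 - 1) = 0" using aux_level_1 \<epsilon> by algebra
  then have \<sigma>1: "\<sigma> 1 = -1" using rho.sigma_1_ne_1 by simp
  have "\<sigma> 2 * \<rho> 2 - \<sigma> 1 * \<rho> 1 = \<epsilon> * (\<sigma> 1 * \<rho> 2 - \<sigma> 2 * \<rho> 1)"
    using aux_at[of 2] D_ge_3 by simp
  then have "(\<sigma> 2 - 1) * (\<rho> 2 - \<rho> 1) = 0" using \<epsilon> \<sigma>1 by algebra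
  with sigma_2_gt_1[OF \<sigma>1] have \<rho>2: "\<rho> 2 = \<rho> 1" by simp
  have "(\<rho> 1 - 1) * (k * \<rho> 1 + 1) = 0"
    using rho.sigma_level_1 rho.k_level_1 \<rho>2 by algebra
  then have k\<rho>: "k * \<rho> 1 = -1" using rho.sigma_1_ne_1 by simp
  have "\<sigma> 3 * \<rho> 3 - \<sigma> 2 * \<rho> 2 = \<epsilon> * (\<sigma> 2 * \<rho> 3 - \<sigma> 3 * \<rho> 2)"
    using aux_at[of 3] D_ge_3 by simp
  then have "(\<sigma> 3 + \<sigma> 2) * (\<rho> 3 - \<rho> 2) = 0" using \<epsilon> by algebra
  with sigma_3_ne_minus_sigma_2[OF \<sigma>1] have "\<rho> 3 = \<rho> 2" by (auto simp: add_eq_0_iff)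
  then have "real (c 2) * \<rho> 1 + real (a 2) * \<rho> 1 + real (b 2) * \<rho> 1 = k * \<rho> 1 * \<rho> 1"
    using rho.sigma_level_2 \<rho>2 by simp
  then have "\<rho> 1 * (k + 1) = 0" using rho.k_level_2 k\<rho> by algebra
  then show False using k_pos k\<rho> by simp
qed

lemma aux_ne_one: "\<epsilon> \<noteq> 1"
proof -
  interpret rho: auxiliary_parameter_pair D a b c \<rho> \<sigma> "-\<epsilon>" by (rule swap)
  show ?thesis using rho.aux_ne_minus_one by simp
qed

lemma sigma_1_ne_aux: "\<sigma> 1 \<noteq> \<epsilon>"
proof
  assume "\<sigma> 1 = \<epsilon>"
  have "(\<sigma> 1 - 1) * (\<sigma> 1 + 1) = 0" using aux_level_1 unfolding \<open>\<sigma> 1 = \<epsilon>\<close> by algebra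
  then have "\<sigma> 1 = -1" using sigma_1_ne_1 by simp
  then show False using aux_ne_minus_one \<open>\<sigma> 1 = \<epsilon>\<close> by simp
qed

lemma a_level:
  assumes i: "1 \<le> i" "i < D"
  shows "real (a i) * (\<sigma> (i + 1) - \<sigma> i) * (\<sigma> (i - 1) - \<sigma> i) * (\<sigma> 1 - \<epsilon>)
    = k * (1 - \<epsilon>) * (\<sigma> (i + 1) - \<sigma> 1 * \<sigma> i) * (\<sigma> (i - 1) - \<sigma> 1 * \<sigma> i)"
proof -
  interpret rho: auxiliary_parameter_pair D a b c \<rho> \<sigma> "-\<epsilon>" by (rule swap)
  have "\<sigma> (i + 1) * \<rho> (i + 1) - \<sigma> i * \<rho> i = \<epsilon> * (\<sigma> i * \<rho> (i + 1) - \<sigma> (i + 1) * \<rho> i)"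
    using aux_at[of "i + 1"] i by simp
  moreover have "real (c i) \<noteq> 0" using abc_pos[OF i] by simp
  moreover have "\<rho> (i - 1) \<noteq> 0 \<or> \<rho> i \<noteq> 0" using rho.sigma_no_consecutive_zeros[of "i - 1"] i by simp
  ultimately show ?thesis
    using a_level_identity[OF k_eq[OF i] sigma_recurrence[OF i] rho.sigma_recurrence[OF i]
        aux_at[OF i(1) less_imp_le[OF i(2)]]] aux_level_1 aux_ne_minus_one by blast
qed

lemma a_level_1: "real (a 1) * (\<sigma> 2 - \<sigma> 1) * (1 - \<sigma> 1) * (\<sigma> 1 - \<epsilon>)
    = k * (1 - \<epsilon>) * (\<sigma> 2 - \<sigma> 1 * \<sigma> 1) * (1 - \<sigma> 1 * \<sigma> 1)"
  using a_level[of 1] D_ge_3 sigma_0 by (simp add: numeral_2_eq_2)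

lemma sigma_2_ne_sigma_1_sq: "\<sigma> 1 ^ 2 \<noteq> \<sigma> 2"
proof
  assume sq: "\<sigma> 1 ^ 2 = \<sigma> 2"
  have "real (a 1) * (\<sigma> 2 - \<sigma> 1) * (1 - \<sigma> 1) * (\<sigma> 1 - \<epsilon>) = 0"
    using a_level_1 sq by (simp add: power2_eq_square)
  moreover have "real (a 1) \<noteq> 0" using abc_pos[of 1] D_ge_3 by simp
  ultimately have "\<sigma> 2 = \<sigma> 1" using sigma_1_ne_1 sigma_1_ne_aux by simp
  with sq have "\<sigma> 1 * (\<sigma> 1 - 1) = 0" by (simp add: power2_eq_square algebra_simps)
  then have "\<sigma> 1 = 0" using sigma_1_ne_1 by simp
  then show False using sigma_level_1 sq by simp
qed

lemma aux_sigma_1_ne_1: "\<epsilon> * \<sigma> 1 \<noteq> 1"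
proof
  assume h: "\<epsilon> * \<sigma> 1 = 1"
  interpret rho: auxiliary_parameter_pair D a b c \<rho> \<sigma> "-\<epsilon>" by (rule swap)
  have "\<rho> 1 * (\<sigma> 1 - \<epsilon>) = 0" using aux_level_1 h by algebra
  then have \<rho>1: "\<rho> 1 = 0" using sigma_1_ne_aux by simp
  then have "real (b 1) * \<rho> 2 = -1" using rho.sigma_level_1 by simp
  then have "\<rho> 2 \<noteq> 0" by auto
  have "\<sigma> 2 * \<rho> 2 - \<sigma> 1 * \<rho> 1 = \<epsilon> * (\<sigma> 1 * \<rho> 2 - \<sigma> 2 * \<rho> 1)"
    using aux_at[of 2] D_ge_3 by simp
  then have "\<rho> 2 * (\<sigma> 2 - 1) = 0" using \<rho>1 h by algebra
  with \<open>\<rho> 2 \<noteq> 0\<close> have \<sigma>2: "\<sigma> 2 = 1" by simp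
  have "real (a 2) * (\<sigma> 3 - 1) * (\<sigma> 1 - 1) * (\<sigma> 1 - \<epsilon>) = 0"
    using a_level[of 2] D_ge_3 \<sigma>2 by simp
  moreover have "real (a 2) \<noteq> 0" using abc_pos[of 2] D_ge_3 by simp
  ultimately have \<sigma>3: "\<sigma> 3 = 1" using sigma_1_ne_1 sigma_1_ne_aux by simp
  have "(real (a 2) + real (b 2)) * (1 - \<sigma> 1) = 0"
    using sigma_level_2 k_level_2 \<sigma>2 \<sigma>3 by algebra
  moreover have "0 < a 2" using abc_pos[of 2] D_ge_3 by simp
  ultimately show False using sigma_1_ne_1 by simp
qed

lemma sigma_2_identity: "(1 - \<sigma> 2) * (\<sigma> 1 - \<epsilon>) = k * (1 - \<epsilon> * \<sigma> 1) * (\<sigma> 2 - \<sigma> 1 ^ 2)"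
proof -
  have "(1 - \<sigma> 1) * ((1 - \<sigma> 2) * (\<sigma> 1 - \<epsilon>) - k * (1 - \<epsilon> * \<sigma> 1) * (\<sigma> 2 - \<sigma> 1 ^ 2)) = 0"
    using a_level_1 sigma_level_1 k_level_1 by algebra
  then show ?thesis using sigma_1_ne_1 by simp
qed

lemma sigma_differences_nonzero:
  assumes i: "1 \<le> i" "i < D"
  shows "(\<sigma> (i + 1) - \<sigma> i) * (\<sigma> (i - 1) - \<sigma> i) \<noteq> 0"
proof
  assume zero: "(\<sigma> (i + 1) - \<sigma> i) * (\<sigma> (i - 1) - \<sigma> i) = 0"
  have "\<sigma> (i - 1) \<noteq> 0 \<or> \<sigma> i \<noteq> 0" using sigma_no_consecutive_zeros[of "i - 1"] i by simp
  then have "\<sigma> i \<noteq> 0" using zero sigma_no_consecutive_zeros[of i] i by auto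
  then have "\<sigma> i - \<sigma> 1 * \<sigma> i \<noteq> 0" using sigma_1_ne_1 by (simp add: right_diff_distrib'[symmetric])
  have "k * (1 - \<epsilon>) \<noteq> 0" using k_pos aux_ne_one by simp
  note level = a_level[OF i] and rec = sigma_recurrence[OF i] and k_i = k_eq[OF i]
  from zero consider "\<sigma> (i + 1) = \<sigma> i" | "\<sigma> (i - 1) = \<sigma> i" by auto
  then show False
  proof cases
    case 1
    then have "\<sigma> (i - 1) = \<sigma> 1 * \<sigma> i"
      using level \<open>k * (1 - \<epsilon>) \<noteq> 0\<close> \<open>\<sigma> i - \<sigma> 1 * \<sigma> i \<noteq> 0\<close> by simp
    then have "\<sigma> i * ((real (a i) + real (b i)) * (1 - \<sigma> 1)) = 0"
      using rec k_i 1 by algebra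
    then show False using \<open>\<sigma> i \<noteq> 0\<close> sigma_1_ne_1 abc_pos[OF i] by simp
  next
    case 2
    then have "\<sigma> (i + 1) = \<sigma> 1 * \<sigma> i"
      using level \<open>k * (1 - \<epsilon>) \<noteq> 0\<close> \<open>\<sigma> i - \<sigma> 1 * \<sigma> i \<noteq> 0\<close> by simp
    then have "\<sigma> i * ((real (a i) + real (c i)) * (1 - \<sigma> 1)) = 0"
      using rec k_i 2 by algebra
    then show False using \<open>\<sigma> i \<noteq> 0\<close> sigma_1_ne_1 abc_pos[OF i] by simp
  qed
qed

lemma g_eq_k_ratio: "(\<epsilon> - 1) * (1 - \<sigma> 2) / ((\<sigma> 1 ^ 2 - \<sigma> 2) * (1 - \<epsilon> * \<sigma> 1)) = k * (1 - \<epsilon>) / (\<sigma> 1 - \<epsilon>)"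
proof -
  have "(\<epsilon> - 1) * (1 - \<sigma> 2) * (\<sigma> 1 - \<epsilon>) = k * (1 - \<epsilon>) * ((\<sigma> 1 ^ 2 - \<sigma> 2) * (1 - \<epsilon> * \<sigma> 1))"
    using sigma_2_identity by algebra
  moreover have "(\<sigma> 1 ^ 2 - \<sigma> 2) * (1 - \<epsilon> * \<sigma> 1) \<noteq> 0"
    using sigma_2_ne_sigma_1_sq aux_sigma_1_ne_1 by simp
  ultimately show ?thesis using sigma_1_ne_aux by (simp add: frac_eq_eq)
qed

theorem a_formula:
  "\<forall>i. 1 \<le> i \<and> i \<le> D - 1 \<longrightarrow>
     (\<sigma> (i + 1) - \<sigma> i) * (\<sigma> (i - 1) - \<sigma> i) \<noteq> 0 \<and>
     (\<sigma> 1 ^ 2 - \<sigma> 2) * (1 - \<epsilon> * \<sigma> 1) \<noteq> 0 \<and>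
     real (a i) =
       ((\<epsilon> - 1) * (1 - \<sigma> 2) / ((\<sigma> 1 ^ 2 - \<sigma> 2) * (1 - \<epsilon> * \<sigma> 1))) *
       ((\<sigma> (i + 1) - \<sigma> 1 * \<sigma> i) * (\<sigma> (i - 1) - \<sigma> 1 * \<sigma> i) /
        ((\<sigma> (i + 1) - \<sigma> i) * (\<sigma> (i - 1) - \<sigma> i)))"
proof (intro allI impI conjI)
  fix i assume "1 \<le> i \<and> i \<le> D - 1"
  then have i: "1 \<le> i" "i < D" using D_ge_3 by auto
  show "(\<sigma> (i + 1) - \<sigma> i) * (\<sigma> (i - 1) - \<sigma> i) \<noteq> 0"
    by (rule sigma_differences_nonzero[OF i])
  show "(\<sigma> 1 ^ 2 - \<sigma> 2) * (1 - \<epsilon> * \<sigma> 1) \<noteq> 0"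
    using sigma_2_ne_sigma_1_sq aux_sigma_1_ne_1 by simp
  have "k * (1 - \<epsilon>) / (\<sigma> 1 - \<epsilon>) *
      ((\<sigma> (i + 1) - \<sigma> 1 * \<sigma> i) * (\<sigma> (i - 1) - \<sigma> 1 * \<sigma> i) / ((\<sigma> (i + 1) - \<sigma> i) * (\<sigma> (i - 1) - \<sigma> i)))
    = k * (1 - \<epsilon>) * ((\<sigma> (i + 1) - \<sigma> 1 * \<sigma> i) * (\<sigma> (i - 1) - \<sigma> 1 * \<sigma> i))
      / ((\<sigma> 1 - \<epsilon>) * ((\<sigma> (i + 1) - \<sigma> i) * (\<sigma> (i - 1) - \<sigma> i)))"
    by simp
  also have "\<dots> = real (a i)"
    using a_level[OF i] sigma_differences_nonzero[OF i] sigma_1_ne_aux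
    by (intro divide_eq_imp) (simp_all add: ac_simps)
  finally show "real (a i) = ((\<epsilon> - 1) * (1 - \<sigma> 2) / ((\<sigma> 1 ^ 2 - \<sigma> 2) * (1 - \<epsilon> * \<sigma> 1))) *
       ((\<sigma> (i + 1) - \<sigma> 1 * \<sigma> i) * (\<sigma> (i - 1) - \<sigma> 1 * \<sigma> i) /
        ((\<sigma> (i + 1) - \<sigma> i) * (\<sigma> (i - 1) - \<sigma> i)))"
    unfolding g_eq_k_ratio by simp
qed

end

theorem lemma13p2:
  fixes V :: "'v set" and E :: "'v \<Rightarrow> 'v \<Rightarrow> bool"
    and D :: nat and a b c :: "nat \<Rightarrow> nat"
    and \<sigma> :: "nat \<Rightarrow> real" and \<epsilon> :: real
  assumes "distance_regular V E D a b c"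
    and "D \<ge> 3"
    and "a 1 \<noteq> 0"
    and "nontrivial_pc D a b c \<sigma>"
    and "tight_with_aux D a b c \<sigma> \<epsilon>"
  shows "\<forall>i. 1 \<le> i \<and> i \<le> D - 1 \<longrightarrow>
           (\<sigma> (i + 1) - \<sigma> i) * (\<sigma> (i - 1) - \<sigma> i) \<noteq> 0 \<and>
           (\<sigma> 1 ^ 2 - \<sigma> 2) * (1 - \<epsilon> * \<sigma> 1) \<noteq> 0 \<and>
           real (a i) =
             ((\<epsilon> - 1) * (1 - \<sigma> 2) / ((\<sigma> 1 ^ 2 - \<sigma> 2) * (1 - \<epsilon> * \<sigma> 1))) *
             ((\<sigma> (i + 1) - \<sigma> 1 * \<sigma> i) * (\<sigma> (i - 1) - \<sigma> 1 * \<sigma> i) /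
              ((\<sigma> (i + 1) - \<sigma> i) * (\<sigma> (i - 1) - \<sigma> i)))"
proof -
  interpret distance_regular_graph V E D a b c
    using assms(1) by unfold_locales
  obtain \<rho> where "nontrivial_pc D a b c \<rho>" and "auxiliary_parameter D \<sigma> \<rho> \<epsilon>"
    using assms(5) unfolding tight_with_aux_def by blast
  moreover have "0 < a i \<and> 0 < b i \<and> 0 < c i" if "1 \<le> i" "i < D" for i
    using a_pos[OF assms(3) that] b_pos c_pos that by simp
  ultimately have "auxiliary_parameter_pair D a b c \<sigma> \<rho> \<epsilon>"
    using assms(2,4) a_0 c_1 abc_sum by unfold_locales simp_all
  then show ?thesis by (rule auxiliary_parameter_pair.a_formula)
qed

end
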